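(* Let $\lambda\in K$ and $S=\{D(xy)-D(x)y-xD(y)-\lambda D(x)D(y)\mid x,y\in\mathfrak{S}(X)\}\subseteq K\langle X;D\rangle$. Then $K\langle X;D|S\rangle=K\langle X;D\rangle/Id(S)$ is a free $\lambda$-differential algebra on the set $X$, with $K$-basis $S(D^\omega(X))$.
   Context: $K$ is a commutative ring with unit. A $\lambda$-differential algebra is an associative $K$-algebra $R$ with a $K$-linear $D:R\to R$ satisfying $D(xy)=D(x)y+xD(y)+\lambda D(x)D(y)$ for all $x,y\in R$; free on $X$ means every map from $X$ to such an algebra extends uniquely to a homomorphism commuting with $D$. $S(Y)$ is the free semigroup on $Y$; $\mathfrak{S}_0=S(X)$, $\mathfrak{S}_n=S(X\cup\{D(u)\mid u\in\mathfrak{S}_{n-1}\})$, $\mathfrak{S}(X)=\bigcup_n\mathfrak{S}_n$; $K\langle X;D\rangle$ is the free $K$-module on $\mathfrak{S}(X)$ with concatenation product and $D$ extended linearly. $Id(S)$ is the $K$-span of all $u|_s$, $u$ a word on $X\cup\{\star\}$ (with $D$) containing exactly one $\star$, $u|_s$ the substitution of $s\in S$ for $\star$. $D^\omega(X)=\{D^i(x)\mid i\ge0,x\in X\}$, $D^0(x)=x$. *)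

theory Defs
  imports "HOL-Library.Poly_Mapping"
begin

text \<open>A letter is either a variable or D applied to a word; a word is a list of
letters. Well-formedness w.r.t. a set X: variables lie in X and all words
(including those inside D) are nonempty, i.e. elements of the free semigroup.\<close>

datatype 'x letter = V 'x | Dl "'x letter list"

fun wfl :: "'x set \<Rightarrow> 'x letter \<Rightarrow> bool" where
  "wfl X (V x) = (x \<in> X)"
| "wfl X (Dl w) = (w \<noteq> [] \<and> (\<forall>l\<in>set w. wfl X l))"

definition opwords :: "'x set \<Rightarrow> 'x letter list set" where
  "opwords X = {w. w \<noteq> [] \<and> (\<forall>l\<in>set w. wfl X l)}"

type_synonym ('x, 'k) opoly = "'x letter list \<Rightarrow>\<^sub>0 'k"

definition KXD :: "'x set \<Rightarrow> ('x, 'k::comm_ring_1) opoly set" where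
  "KXD X = {p. Poly_Mapping.keys p \<subseteq> opwords X}"

definition wd :: "'x letter list \<Rightarrow> ('x, 'k::comm_ring_1) opoly" where
  "wd u = Poly_Mapping.single u 1"

definition smult :: "'k::comm_ring_1 \<Rightarrow> ('x, 'k) opoly \<Rightarrow> ('x, 'k) opoly" where
  "smult c p = Poly_Mapping.map (\<lambda>a. c * a) p"

definition pmul :: "('x, 'k::comm_ring_1) opoly \<Rightarrow> ('x, 'k) opoly \<Rightarrow> ('x, 'k) opoly" where
  "pmul p q = (\<Sum>(u, v)\<in>Poly_Mapping.keys p \<times> Poly_Mapping.keys q.
                 Poly_Mapping.single (u @ v) (Poly_Mapping.lookup p u * Poly_Mapping.lookup q v))"

definition pD :: "('x, 'k::comm_ring_1) opoly \<Rightarrow> ('x, 'k) opoly" where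
  "pD p = (\<Sum>u\<in>Poly_Mapping.keys p. Poly_Mapping.single [Dl u] (Poly_Mapping.lookup p u))"

definition Sset :: "'x set \<Rightarrow> 'k::comm_ring_1 \<Rightarrow> ('x, 'k) opoly set" where
  "Sset X lam = {pD (pmul (wd x) (wd y)) - pmul (pD (wd x)) (wd y) - pmul (wd x) (pD (wd y))
                   - smult lam (pmul (pD (wd x)) (pD (wd y))) | x y. x \<in> opwords X \<and> y \<in> opwords X}"

text \<open>Star words: operated words over the alphabet X \<union> {star}, encoded as
letters over 'x option with None = star.\<close>

fun nstar_l :: "'x option letter \<Rightarrow> nat" and nstar_w :: "'x option letter list \<Rightarrow> nat" where
  "nstar_l (V None) = 1"
| "nstar_l (V (Some x)) = 0"
| "nstar_l (Dl w) = nstar_w w"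
| "nstar_w [] = 0"
| "nstar_w (l # ls) = nstar_l l + nstar_w ls"

fun subst_l :: "'x option letter \<Rightarrow> ('x, 'k::comm_ring_1) opoly \<Rightarrow> ('x, 'k) opoly"
and subst_w :: "'x option letter list \<Rightarrow> ('x, 'k::comm_ring_1) opoly \<Rightarrow> ('x, 'k) opoly" where
  "subst_l (V None) s = s"
| "subst_l (V (Some x)) s = wd [V x]"
| "subst_l (Dl w) s = pD (subst_w w s)"
| "subst_w [] s = 0"
| "subst_w [l] s = subst_l l s"
| "subst_w (l # l' # ls) s = pmul (subst_l l s) (subst_w (l' # ls) s)"

definition star_words :: "'x set \<Rightarrow> 'x option letter list set" where
  "star_words X = {u. u \<in> opwords (insert None (Some ` X)) \<and> nstar_w u = 1}"

inductive_set IdS :: "'x set \<Rightarrow> ('x, 'k::comm_ring_1) opoly set \<Rightarrow> ('x, 'k) opoly set"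
  for X :: "'x set" and S :: "('x, 'k) opoly set" where
  gen: "u \<in> star_words X \<Longrightarrow> s \<in> S \<Longrightarrow> subst_w u s \<in> IdS X S"
| zero: "0 \<in> IdS X S"
| add: "a \<in> IdS X S \<Longrightarrow> b \<in> IdS X S \<Longrightarrow> a + b \<in> IdS X S"
| scal: "a \<in> IdS X S \<Longrightarrow> smult c a \<in> IdS X S"

fun Dpow :: "nat \<Rightarrow> 'x \<Rightarrow> 'x letter" where
  "Dpow 0 x = V x"
| "Dpow (Suc i) x = Dl [Dpow i x]"

definition basis_words :: "'x set \<Rightarrow> 'x letter list set" where
  "basis_words X = {w. w \<noteq> [] \<and> (\<forall>l\<in>set w. \<exists>i. \<exists>x\<in>X. l = Dpow i x)}"

text \<open>A (not necessarily unital) associative K-algebra is modelled by a type of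
class ring (nonunital associative ring) with a scalar action sc; D is K-linear
and satisfies the lambda-Leibniz rule.\<close>

definition lambda_diff_alg ::
  "('k::comm_ring_1 \<Rightarrow> 'r::ring \<Rightarrow> 'r) \<Rightarrow> ('r \<Rightarrow> 'r) \<Rightarrow> 'k \<Rightarrow> bool" where
  "lambda_diff_alg sc Dr lam \<longleftrightarrow>
     (\<forall>a x y. sc a (x + y) = sc a x + sc a y) \<and>
     (\<forall>a b x. sc (a + b) x = sc a x + sc b x) \<and>
     (\<forall>a b x. sc (a * b) x = sc a (sc b x)) \<and>
     (\<forall>x. sc 1 x = x) \<and>
     (\<forall>a x y. sc a (x * y) = sc a x * y \<and> sc a (x * y) = x * sc a y) \<and>
     (\<forall>x y. Dr (x + y) = Dr x + Dr y) \<and>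
     (\<forall>a x. Dr (sc a x) = sc a (Dr x)) \<and>
     (\<forall>x y. Dr (x * y) = Dr x * y + x * Dr y + sc lam (Dr x * Dr y))"

text \<open>K<X;D|S> = K<X;D>/Id(S) is a lambda-differential algebra: Id(S) lies in
K<X;D>, is a two-sided ideal closed under D (so product and D descend to the
quotient), and the lambda-Leibniz rule holds modulo Id(S).\<close>

definition quotient_is_lambda_diff :: "'x set \<Rightarrow> 'k::comm_ring_1 \<Rightarrow> ('x, 'k) opoly set \<Rightarrow> bool" where
  "quotient_is_lambda_diff X lam I \<longleftrightarrow>
     I \<subseteq> KXD X \<and>
     (\<forall>a\<in>I. \<forall>p\<in>KXD X. pmul p a \<in> I \<and> pmul a p \<in> I) \<and>
     (\<forall>a\<in>I. pD a \<in> I) \<and>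
     (\<forall>p\<in>KXD X. \<forall>q\<in>KXD X.
        pD (pmul p q) - pmul (pD p) q - pmul p (pD q) - smult lam (pmul (pD p) (pD q)) \<in> I)"

text \<open>The cosets of the basis words form a K-basis of K<X;D>/I: every element is
congruent modulo I to a unique K-combination of basis words.\<close>

definition is_quotient_basis :: "'x set \<Rightarrow> ('x, 'k::comm_ring_1) opoly set \<Rightarrow> 'x letter list set \<Rightarrow> bool" where
  "is_quotient_basis X I B \<longleftrightarrow>
     (\<forall>p\<in>KXD X. \<exists>!q. Poly_Mapping.keys q \<subseteq> B \<and> p - q \<in> I)"

text \<open>A homomorphism of lambda-differential algebras K<X;D>/I \<rightarrow> R, presented as a
map on K<X;D> vanishing on I, extending f on X.\<close>

definition quot_hom_ext ::
  "'x set \<Rightarrow> ('x, 'k::comm_ring_1) opoly set \<Rightarrow> ('k \<Rightarrow> 'r::ring \<Rightarrow> 'r) \<Rightarrow> ('r \<Rightarrow> 'r)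
    \<Rightarrow> ('x \<Rightarrow> 'r) \<Rightarrow> (('x, 'k) opoly \<Rightarrow> 'r) \<Rightarrow> bool" where
  "quot_hom_ext X I sc Dr f \<phi> \<longleftrightarrow>
     (\<forall>p\<in>KXD X. \<forall>q\<in>KXD X. \<phi> (p + q) = \<phi> p + \<phi> q) \<and>
     (\<forall>c. \<forall>p\<in>KXD X. \<phi> (smult c p) = sc c (\<phi> p)) \<and>
     (\<forall>p\<in>KXD X. \<forall>q\<in>KXD X. \<phi> (pmul p q) = \<phi> p * \<phi> q) \<and>
     (\<forall>p\<in>KXD X. \<phi> (pD p) = Dr (\<phi> p)) \<and>
     (\<forall>a\<in>I. \<phi> a = 0) \<and>
     (\<forall>x\<in>X. \<phi> (wd [V x]) = f x)"

end

theory Submission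
  imports Defs
begin

(*
  Words (lists of letters) form the free monoid under
  concatenation, so the finitely supported maps  'x letter list \<Rightarrow>\<^sub>0 'k  form its
  monoid algebra: pmul is the ring multiplication and smult is multiplication by
  a constant (the empty word).
  The theorem has three parts, proved in this order:
  (1) Id(S) is an ideal of K<X;D> that is closed under D and contains the
      lambda-Leibniz defect of any two elements (the defect is bilinear, and on
      words it lies in S), so K<X;D>/Id(S) is a lambda-differential algebra.
  (2) Universal property: for a lambda-differential algebra R and f : X \<rightarrow> R,
      recursive evaluation of words extended linearly is a homomorphism killing
      Id(S); any other homomorphism agrees with it on words, hence everywhere.
  (3) Basis: every element is congruent modulo Id(S) to a combination of words
      over D^\<omega>(X) (spanning, by rewriting D(l b) with the Leibniz rule), and
      such a combination lying in Id(S) vanishes (independence, by evaluating in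
      the monoid algebra equipped with a lambda-derivation fixing these words).
*)

section \<open>The operated polynomials as a monoid algebra\<close>

text \<open>Concatenation makes lists a monoid, so the library's convolution product
on finitely supported maps is available for operated polynomials.\<close>

instantiation list :: (type) monoid_add
begin
definition plus_list :: "'a list \<Rightarrow> 'a list \<Rightarrow> 'a list" where "plus_list = (@)"
definition zero_list :: "'a list" where "zero_list = []"
instance by standard (auto simp: plus_list_def zero_list_def)
end

lemma plus_list_append [simp]: "(u::'a list) + v = u @ v"
  by (simp add: plus_list_def)

lemma zero_list_Nil [simp]: "(0::'a list) = []"
  by (simp add: zero_list_def)

abbreviation keys where "keys \<equiv> Poly_Mapping.keys"
abbreviation lookup where "lookup \<equiv> Poly_Mapping.lookup"
abbreviation single where "single \<equiv> Poly_Mapping.single"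

abbreviation scalar :: "'k::comm_ring_1 \<Rightarrow> ('x, 'k) opoly" where
  "scalar c \<equiv> single [] c"

lemma sum_monomials: "(p::'a \<Rightarrow>\<^sub>0 'b::comm_monoid_add) = (\<Sum>u\<in>keys p. single u (lookup p u))"
  by (rule poly_mapping_eqI) (simp add: lookup_sum lookup_single when_def in_keys_iff)

lemma keys_induct [consumes 1, case_names zero single add]:
  assumes "keys p \<subseteq> S" and "P 0" and "\<And>u c. u \<in> S \<Longrightarrow> P (single u c)"
    and "\<And>a b. keys a \<subseteq> S \<Longrightarrow> keys b \<subseteq> S \<Longrightarrow> P a \<Longrightarrow> P b \<Longrightarrow> P (a + b)"
  shows "P (p::'a \<Rightarrow>\<^sub>0 'b::comm_monoid_add)"
proof -
  have "keys (\<Sum>u\<in>A. single u (lookup p u)) \<subseteq> S \<and> P (\<Sum>u\<in>A. single u (lookup p u))"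
    if "A \<subseteq> keys p" for A
    using finite_subset[OF that finite_keys] that
  proof (induction A rule: finite_induct)
    case empty then show ?case using assms(2) by simp
  next
    case (insert x F)
    let ?m = "single x (lookup p x)" and ?r = "\<Sum>u\<in>F. single u (lookup p u)"
    have "x \<in> S" using insert.prems assms(1) by blast
    then have m: "keys ?m \<subseteq> S" "P ?m" using assms(3) by auto
    have r: "keys ?r \<subseteq> S" "P ?r" using insert.IH insert.prems by auto
    have "keys (?m + ?r) \<subseteq> S" using keys_add[of ?m ?r] m(1) r(1) by blast
    moreover have "P (?m + ?r)" using assms(4)[OF m(1) r(1) m(2) r(2)] .
    ultimately show ?case using insert.hyps by simp
  qed
  from this[of "keys p"] show ?thesis by (simp flip: sum_monomials)
qed

lemma pmul_eq_times: "pmul p q = p * q"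
proof -
  have "p * q = (\<Sum>u\<in>keys p. single u (lookup p u)) * (\<Sum>v\<in>keys q. single v (lookup q v))"
    by (simp flip: sum_monomials)
  also have "\<dots> = pmul p q"
    unfolding pmul_def by (simp add: sum_product mult_single sum.cartesian_product)
  finally show ?thesis by simp
qed

lemma smult_eq_scalar: "smult c p = scalar c * p"
  unfolding smult_def using mult_map_scale_conv_mult[of c p] by simp

lemma scalar_one [simp]: "(scalar 1 :: ('x, 'k::comm_ring_1) opoly) = 1"
  by (metis single_one zero_list_Nil)

lemma wd_Nil: "(wd [] :: ('x, 'k::comm_ring_1) opoly) = 1"
  by (simp add: wd_def)

lemma wd_append: "wd (u @ v) = (wd u * wd v :: ('x, 'k::comm_ring_1) opoly)"
  by (simp add: wd_def mult_single)

lemma wd_Cons: "wd (a # u) = (wd [a] * wd u :: ('x, 'k::comm_ring_1) opoly)"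
  using wd_append[of "[a]" u] by simp

lemma single_eq_scalar_wd: "single u c = scalar c * (wd u :: ('x, 'k::comm_ring_1) opoly)"
  by (simp add: wd_def mult_single)

lemma single_eq_smult_wd: "single u c = smult c (wd u :: ('x, 'k::comm_ring_1) opoly)"
  by (simp add: smult_eq_scalar wd_def mult_single)

lemma sum_scalar_words: "(p::('x, 'k::comm_ring_1) opoly) = (\<Sum>u\<in>keys p. scalar (lookup p u) * wd u)"
proof -
  have "p = (\<Sum>u\<in>keys p. single u (lookup p u))" by (rule sum_monomials)
  also have "\<dots> = (\<Sum>u\<in>keys p. scalar (lookup p u) * wd u)"
    by (intro sum.cong refl single_eq_scalar_wd)
  finally show ?thesis .
qed

lemma scalar_central: "scalar c * p = p * (scalar c :: ('x, 'k::comm_ring_1) opoly)"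
proof -
  have "scalar c * p = (\<Sum>u\<in>keys p. scalar c * single u (lookup p u))"
    by (subst sum_monomials[of p]) (simp add: sum_distrib_left)
  also have "\<dots> = (\<Sum>u\<in>keys p. single u (lookup p u) * scalar c)"
    by (simp add: mult_single mult.commute)
  also have "\<dots> = p * scalar c"
    by (subst (2) sum_monomials[of p]) (simp add: sum_distrib_right)
  finally show ?thesis .
qed

lemma times_scalar_times: "x * (scalar c * y) = scalar c * (x * y :: ('x, 'k::comm_ring_1) opoly)"
proof -
  have "x * (scalar c * y) = (x * scalar c) * y" by (simp add: mult.assoc)
  also have "\<dots> = (scalar c * x) * y" by (simp only: scalar_central)
  finally show ?thesis by (simp add: mult.assoc)
qed

lemma scalar_scalar: "scalar a * (scalar b * x) = scalar (a * b) * (x :: ('x, 'k::comm_ring_1) opoly)"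
  by (simp add: mult_single mult.assoc[symmetric])

lemma scalar_swap: "scalar a * (scalar b * x) = scalar b * (scalar a * (x :: ('x, 'k::comm_ring_1) opoly))"
  by (simp only: scalar_scalar mult.commute)

lemma scalar_times_scalar_times:
  "(scalar a * x) * (scalar b * y) = scalar (a * b) * (x * y :: ('x, 'k::comm_ring_1) opoly)"
proof -
  have "(scalar a * x) * (scalar b * y) = scalar a * (x * (scalar b * y))"
    by (simp only: mult.assoc)
  also have "\<dots> = scalar a * (scalar b * (x * y))"
    by (simp only: times_scalar_times[of x b y])
  also have "\<dots> = scalar (a * b) * (x * y)"
    by (rule scalar_scalar)
  finally show ?thesis .
qed

lemma lookup_smult: "lookup (smult c p) u = c * lookup p u"
  by (simp add: smult_def Poly_Mapping.map.rep_eq when_def)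

lemma keys_times: "keys (p * q :: ('x, 'k::comm_ring_1) opoly) \<subseteq> {u @ v | u v. u \<in> keys p \<and> v \<in> keys q}"
  using keys_mult[of p q] by simp

lemma keys_scalar_times: "keys (scalar c * p :: ('x, 'k::comm_ring_1) opoly) \<subseteq> keys p"
  using keys_times[of "scalar c" p] by (auto split: if_splits)

text \<open>Any map
g on words extends to the K-linear map  lin_ext g  on finitely supported
combinations of words; this provides both the evaluation homomorphism and
linear operators such as D on the operated polynomials.\<close>

locale kmodule =
  fixes sc :: "'k::comm_ring_1 \<Rightarrow> 'r::ab_group_add \<Rightarrow> 'r"
  assumes sc_add_right: "sc a (x + y) = sc a x + sc a y"
    and sc_add_left: "sc (a + b) x = sc a x + sc b x"
    and sc_mult: "sc (a * b) x = sc a (sc b x)"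
begin

lemma sc_zero [simp]: "sc 0 x = 0"
  using sc_add_left[of 0 0 x] by simp

lemma sc_zero_right [simp]: "sc a 0 = 0"
  using sc_add_right[of a 0 0] by simp

lemma sc_sum: "sc a (sum f A) = (\<Sum>i\<in>A. sc a (f i))"
  by (induction A rule: infinite_finite_induct) (auto simp: sc_add_right)

definition lin_ext :: "('w \<Rightarrow> 'r) \<Rightarrow> ('w \<Rightarrow>\<^sub>0 'k) \<Rightarrow> 'r" where
  "lin_ext g p = (\<Sum>u\<in>keys p. sc (lookup p u) (g u))"

lemma lin_ext_superset: "finite A \<Longrightarrow> keys p \<subseteq> A \<Longrightarrow> lin_ext g p = (\<Sum>u\<in>A. sc (lookup p u) (g u))"
  unfolding lin_ext_def by (rule sum.mono_neutral_left) (auto simp: in_keys_iff)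

lemma lin_ext_add: "lin_ext g (p + q) = lin_ext g p + lin_ext g q"
proof -
  let ?A = "keys p \<union> keys q"
  have "lin_ext g (p + q) = (\<Sum>u\<in>?A. sc (lookup (p + q) u) (g u))"
    using keys_add[of p q] by (intro lin_ext_superset) auto
  also have "\<dots> = (\<Sum>u\<in>?A. sc (lookup p u) (g u)) + (\<Sum>u\<in>?A. sc (lookup q u) (g u))"
    by (simp add: lookup_add sc_add_left sum.distrib)
  also have "\<dots> = lin_ext g p + lin_ext g q"
    by (subst (1 2) lin_ext_superset) auto
  finally show ?thesis .
qed

lemma lin_ext_zero [simp]: "lin_ext g 0 = 0"
  by (simp add: lin_ext_def)

lemma lin_ext_diff: "lin_ext g (p - q) = lin_ext g p - lin_ext g q"
  using lin_ext_add[of g "p - q" q] by (simp add: eq_diff_eq)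

lemma lin_ext_sum: "lin_ext g (sum f A) = (\<Sum>i\<in>A. lin_ext g (f i))"
  by (induction A rule: infinite_finite_induct) (auto simp: lin_ext_add)

lemma lin_ext_single: "lin_ext g (single w c) = sc c (g w)"
  by (subst lin_ext_superset[of "{w}"]) auto

lemma lin_ext_smult: "lin_ext g (smult c p) = sc c (lin_ext g p)"
proof -
  have "keys (smult c p) \<subseteq> keys p" by (auto simp: in_keys_iff lookup_smult)
  then have "lin_ext g (smult c p) = (\<Sum>u\<in>keys p. sc (lookup (smult c p) u) (g u))"
    by (intro lin_ext_superset) auto
  also have "\<dots> = sc c (lin_ext g p)"
    by (simp add: lookup_smult sc_mult lin_ext_def sc_sum)
  finally show ?thesis .
qed

end

interpretation alg: kmodule "(\<lambda>c x. scalar c * x) :: 'k::comm_ring_1 \<Rightarrow> ('x, 'k) opoly \<Rightarrow> ('x, 'k) opoly"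
  by unfold_locales (auto simp: distrib_left distrib_right single_add scalar_scalar)

lemma alg_lin_ext_wd: "alg.lin_ext t (wd w) = t w"
  by (simp add: wd_def alg.lin_ext_single)

lemma alg_lin_ext_scalar: "alg.lin_ext t (scalar c * p) = scalar c * alg.lin_ext t p"
  using alg.lin_ext_smult[of t c p] by (simp add: smult_eq_scalar)

lemma alg_lin_ext_expand: "alg.lin_ext t p = (\<Sum>u\<in>keys p. scalar (lookup p u) * t u)"
  by (simp add: alg.lin_ext_def)

lemma pD_wd: "pD (wd w :: ('x, 'k::comm_ring_1) opoly) = wd [Dl w]"
  by (simp add: pD_def wd_def)

lemma pD_eq_lin_ext: "pD = alg.lin_ext (\<lambda>u. wd [Dl u])"
  unfolding pD_def alg.lin_ext_def by (intro ext sum.cong refl single_eq_scalar_wd)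

lemma pD_diff: "pD (p - q) = pD p - pD q"
  by (simp add: pD_eq_lin_ext alg.lin_ext_diff)

lemma pD_add: "pD (p + q) = pD p + pD q"
  by (simp add: pD_eq_lin_ext alg.lin_ext_add)

lemma pD_scalar: "pD (scalar c * p) = scalar c * pD p"
  by (simp add: pD_eq_lin_ext alg_lin_ext_scalar)

text \<open>For an operator T, the failure of T to satisfy the lambda-Leibniz rule on p, q.
The generators in S are exactly the defects of D on pairs of words.\<close>
definition leibniz_defect ::
  "(('x, 'k::comm_ring_1) opoly \<Rightarrow> ('x, 'k) opoly) \<Rightarrow> 'k \<Rightarrow> ('x, 'k) opoly \<Rightarrow> ('x, 'k) opoly \<Rightarrow> ('x, 'k) opoly"
where
  "leibniz_defect T lam p q = T (p * q) - T p * q - p * T q - scalar lam * (T p * T q)"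

lemma sum_scalar_times_sum_scalar:
  "(\<Sum>u\<in>A. scalar (f u) * g u) * (\<Sum>v\<in>B. scalar (f' v) * g' v) =
   (\<Sum>u\<in>A. \<Sum>v\<in>B. scalar (f u * f' v) * (g u * (g' v :: ('x, 'k::comm_ring_1) opoly)))"
  by (simp only: sum_product scalar_times_scalar_times)

lemma leibniz_defect_bilinear:
  "leibniz_defect (alg.lin_ext t) lam p q =
     (\<Sum>u\<in>keys p. \<Sum>v\<in>keys q. scalar (lookup p u * lookup q v) * leibniz_defect (alg.lin_ext t) lam (wd u) (wd v))"
proof -
  let ?T = "alg.lin_ext t" and ?a = "lookup p" and ?b = "lookup q"
  have p_expand: "p = (\<Sum>u\<in>keys p. scalar (?a u) * wd u)" and q_expand: "q = (\<Sum>v\<in>keys q. scalar (?b v) * wd v)"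
    by (rule sum_scalar_words)+
  have Tp_expand: "?T p = (\<Sum>u\<in>keys p. scalar (?a u) * ?T (wd u))"
    using alg_lin_ext_expand[of t p] by (simp only: alg_lin_ext_wd)
  have Tq_expand: "?T q = (\<Sum>v\<in>keys q. scalar (?b v) * ?T (wd v))"
    using alg_lin_ext_expand[of t q] by (simp only: alg_lin_ext_wd)
  have "p * q = (\<Sum>u\<in>keys p. \<Sum>v\<in>keys q. scalar (?a u * ?b v) * (wd u * wd v))"
    using sum_scalar_times_sum_scalar[of ?a wd "keys p" ?b wd "keys q"]
    by (simp only: p_expand[symmetric] q_expand[symmetric])
  then have T_product: "?T (p * q) = (\<Sum>u\<in>keys p. \<Sum>v\<in>keys q. scalar (?a u * ?b v) * ?T (wd u * wd v))"
    by (simp only: alg.lin_ext_sum alg_lin_ext_scalar)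
  have T_left: "?T p * q = (\<Sum>u\<in>keys p. \<Sum>v\<in>keys q. scalar (?a u * ?b v) * (?T (wd u) * wd v))"
    using sum_scalar_times_sum_scalar[of ?a "\<lambda>u. ?T (wd u)" "keys p" ?b wd "keys q"]
    by (simp only: Tp_expand[symmetric] q_expand[symmetric])
  have T_right: "p * ?T q = (\<Sum>u\<in>keys p. \<Sum>v\<in>keys q. scalar (?a u * ?b v) * (wd u * ?T (wd v)))"
    using sum_scalar_times_sum_scalar[of ?a wd "keys p" ?b "\<lambda>v. ?T (wd v)" "keys q"]
    by (simp only: Tq_expand[symmetric] p_expand[symmetric])
  have T_both: "scalar lam * (?T p * ?T q) =
      (\<Sum>u\<in>keys p. \<Sum>v\<in>keys q. scalar (?a u * ?b v) * (scalar lam * (?T (wd u) * ?T (wd v))))"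
    using sum_scalar_times_sum_scalar[of ?a "\<lambda>u. ?T (wd u)" "keys p" ?b "\<lambda>v. ?T (wd v)" "keys q"]
    by (simp only: Tq_expand[symmetric] Tp_expand[symmetric] sum_distrib_left scalar_swap)
  show ?thesis
    unfolding leibniz_defect_def T_product T_left T_right T_both by (simp only: sum_subtractf right_diff_distrib)
qed

lemma opwords_append: "u \<in> opwords X \<Longrightarrow> v \<in> opwords X \<Longrightarrow> u @ v \<in> opwords X"
  by (auto simp: opwords_def)

lemma opwords_Dl: "u \<in> opwords X \<Longrightarrow> [Dl u] \<in> opwords X"
  by (simp add: opwords_def)

lemma KXD_wd: "w \<in> opwords X \<Longrightarrow> (wd w :: ('x, 'k::comm_ring_1) opoly) \<in> KXD X"
  by (simp add: KXD_def wd_def)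

lemma KXD_zero [simp]: "0 \<in> KXD X"
  by (simp add: KXD_def)

lemma KXD_add: "p \<in> KXD X \<Longrightarrow> q \<in> KXD X \<Longrightarrow> p + q \<in> KXD X"
  unfolding KXD_def using keys_add[of p q] by blast

lemma KXD_diff: "p \<in> KXD X \<Longrightarrow> q \<in> KXD X \<Longrightarrow> p - q \<in> KXD X"
  unfolding KXD_def using keys_diff[of p q] by blast

lemma KXD_times: "p \<in> KXD X \<Longrightarrow> q \<in> KXD X \<Longrightarrow> p * q \<in> KXD X"
  unfolding KXD_def using keys_times[of p q] opwords_append by blast

lemma KXD_smult: "p \<in> KXD X \<Longrightarrow> smult c p \<in> KXD X"
  unfolding KXD_def smult_eq_scalar using keys_scalar_times by blast

lemma KXD_pD: "p \<in> KXD X \<Longrightarrow> pD p \<in> KXD X"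
proof -
  assume "p \<in> KXD X"
  moreover have "keys (pD p) \<subseteq> {[Dl u] | u. u \<in> keys p}"
    unfolding pD_def by (rule order_trans[OF keys_sum]) (auto split: if_splits)
  ultimately show ?thesis using opwords_Dl unfolding KXD_def by fastforce
qed

lemma Sset_KXD: "s \<in> Sset X lam \<Longrightarrow> s \<in> KXD X"
  unfolding Sset_def by (auto simp: pmul_eq_times intro!: KXD_diff KXD_times KXD_pD KXD_wd KXD_smult)

lemma Sset_leibniz_defect:
  "x \<in> opwords X \<Longrightarrow> y \<in> opwords X \<Longrightarrow> leibniz_defect pD lam (wd x) (wd y) \<in> Sset X lam"
  unfolding Sset_def leibniz_defect_def by (auto simp: pmul_eq_times smult_eq_scalar)

text \<open>Words over X are star words without star; lifting them along Some and
substituting gives back the word.  This lets us multiply u|_s by words.\<close>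

abbreviation star_alphabet :: "'x set \<Rightarrow> 'x option set" where
  "star_alphabet X \<equiv> insert None (Some ` X)"

abbreviation lift_word :: "'x letter list \<Rightarrow> 'x option letter list" where
  "lift_word w \<equiv> map (map_letter Some) w"

lemma subst_w_Cons: "ls \<noteq> [] \<Longrightarrow> subst_w (l # ls) s = subst_l l s * subst_w ls s"
  by (cases ls) (auto simp: pmul_eq_times)

lemma subst_w_append: "u \<noteq> [] \<Longrightarrow> v \<noteq> [] \<Longrightarrow> subst_w (u @ v) s = subst_w u s * subst_w v s"
  by (induction u rule: list_nonempty_induct) (simp_all add: subst_w_Cons mult.assoc)

lemma subst_KXD:
  shows "s \<in> KXD X \<Longrightarrow> wfl (star_alphabet X) l \<Longrightarrow> subst_l l s \<in> KXD X"
    and "s \<in> KXD X \<Longrightarrow> w \<noteq> [] \<Longrightarrow> \<forall>l\<in>set w. wfl (star_alphabet X) l \<Longrightarrow> subst_w w s \<in> KXD X"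
proof (induction l s and w s rule: subst_l_subst_w.induct)
  case (2 x s) then show ?case by (auto intro!: KXD_wd simp: opwords_def)
next
  case (3 w s) then show ?case by (auto intro!: KXD_pD)
next
  case (6 l l' ls s) then show ?case by (auto simp: pmul_eq_times intro!: KXD_times)
qed auto

lemma subst_lift_letters:
  "w \<noteq> [] \<Longrightarrow> \<forall>y\<in>set w. subst_l (map_letter Some y) s = wd [y] \<Longrightarrow> subst_w (lift_word w) s = wd w"
  by (induction w rule: list_nonempty_induct) (simp_all add: subst_w_Cons flip: wd_Cons)

lemma subst_lift_letter: "wfl X l \<Longrightarrow> subst_l (map_letter Some l) s = wd [l]"
proof (induction l)
  case (Dl w)
  then have "subst_w (lift_word w) s = wd w" by (auto intro: subst_lift_letters)
  then show ?case by (simp add: pD_wd)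
qed simp

lemma subst_lift_word: "w \<in> opwords X \<Longrightarrow> subst_w (lift_word w) s = wd w"
  by (rule subst_lift_letters) (auto simp: opwords_def subst_lift_letter)

lemma nstar_w_sum_list: "nstar_w w = sum_list (map nstar_l w)"
  by (induction w) auto

lemma nstar_lift: "nstar_l (map_letter Some l) = 0"
  by (induction l) (simp_all add: nstar_w_sum_list comp_def)

lemma wfl_lift: "wfl X l \<Longrightarrow> wfl (star_alphabet X) (map_letter Some l)"
  by (induction l) auto

lemma star_words_iff:
  "u \<in> star_words X \<longleftrightarrow> u \<noteq> [] \<and> (\<forall>l\<in>set u. wfl (star_alphabet X) l) \<and> nstar_w u = 1"
  by (simp add: star_words_def opwords_def)

lemma star_words_append_left: "w \<in> opwords X \<Longrightarrow> u \<in> star_words X \<Longrightarrow> lift_word w @ u \<in> star_words X"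
  by (auto simp: star_words_iff opwords_def wfl_lift nstar_w_sum_list comp_def nstar_lift)

lemma star_words_append_right: "w \<in> opwords X \<Longrightarrow> u \<in> star_words X \<Longrightarrow> u @ lift_word w \<in> star_words X"
  by (auto simp: star_words_iff opwords_def wfl_lift nstar_w_sum_list comp_def nstar_lift)

lemma star_words_Dl: "u \<in> star_words X \<Longrightarrow> [Dl u] \<in> star_words X"
  by (simp add: star_words_iff)

section \<open>Id(S) is a D-closed two-sided ideal\<close>

lemma IdS_scalar: "a \<in> IdS X S \<Longrightarrow> scalar c * a \<in> IdS X S"
  using IdS.scal[of a X S c] by (simp add: smult_eq_scalar)

lemma IdS_diff: "a \<in> IdS X S \<Longrightarrow> b \<in> IdS X S \<Longrightarrow> a - b \<in> IdS X S"
  using IdS.add[of a X S "scalar (-1) * b"] IdS_scalar[of b X S "-1"]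
  by (simp add: single_uminus)

lemma IdS_sum: "(\<And>i. i \<in> A \<Longrightarrow> f i \<in> IdS X S) \<Longrightarrow> sum f A \<in> IdS X S"
  by (induction A rule: infinite_finite_induct) (auto intro: IdS.add IdS.zero)

lemma generator_in_IdS: "s \<in> S \<Longrightarrow> s \<in> IdS X S"
  using IdS.gen[of "[V None]" X s S] by (simp add: star_words_iff)

lemma IdS_KXD: "a \<in> IdS X S \<Longrightarrow> S \<subseteq> KXD X \<Longrightarrow> a \<in> KXD X"
  by (induction a rule: IdS.induct) (auto simp: star_words_iff intro: subst_KXD KXD_add KXD_smult)

text \<open>Multiplying u|_s by a word w on the left is (w u)|_s, and similarly on the
right; linearity extends this to all elements of K<X;D>.\<close>
lemma IdS_ideal:
  assumes "a \<in> IdS X S" and "p \<in> KXD X"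
  shows "p * a \<in> IdS X S \<and> a * p \<in> IdS X S"
  using assms
proof (induction a rule: IdS.induct)
  case (gen u s)
  have u: "u \<noteq> []" using gen(1) by (simp add: star_words_iff)
  have left: "wd w * subst_w u s \<in> IdS X S" and right: "subst_w u s * wd w \<in> IdS X S"
    if w: "w \<in> opwords X" for w
  proof -
    have "w \<noteq> []" using w by (simp add: opwords_def)
    then have "wd w * subst_w u s = subst_w (lift_word w @ u) s"
      and "subst_w u s * wd w = subst_w (u @ lift_word w) s"
      using u subst_lift_word[OF w, of s] by (simp_all add: subst_w_append)
    then show "wd w * subst_w u s \<in> IdS X S" "subst_w u s * wd w \<in> IdS X S"
      using IdS.gen[OF star_words_append_left[OF w gen(1)] gen(2)]
        IdS.gen[OF star_words_append_right[OF w gen(1)] gen(2)] by simp_all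
  qed
  have keys: "keys p \<subseteq> opwords X" using gen.prems by (simp add: KXD_def)
  have "p * subst_w u s = (\<Sum>w\<in>keys p. scalar (lookup p w) * (wd w * subst_w u s))"
    by (subst sum_scalar_words) (simp add: sum_distrib_right mult.assoc)
  moreover have "subst_w u s * p = (\<Sum>w\<in>keys p. scalar (lookup p w) * (subst_w u s * wd w))"
    by (subst (1) sum_scalar_words) (simp add: sum_distrib_left times_scalar_times)
  ultimately show ?case using left right keys by (auto intro!: IdS_sum IdS_scalar)
next
  case zero then show ?case by (simp add: IdS.zero)
next
  case (add a b) then show ?case by (simp add: distrib_left distrib_right IdS.add)
next
  case (scal a c) then show ?case
    by (simp add: smult_eq_scalar times_scalar_times mult.assoc IdS_scalar)
qed

lemma IdS_pD: "a \<in> IdS X S \<Longrightarrow> pD a \<in> IdS X S"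
proof (induction a rule: IdS.induct)
  case (gen u s)
  from IdS.gen[OF star_words_Dl[OF gen(1)] gen(2)] show ?case by simp
next
  case zero then show ?case by (simp add: pD_def IdS.zero)
next
  case (add a b) then show ?case by (simp add: pD_add IdS.add)
next
  case (scal a c) then show ?case by (simp add: smult_eq_scalar pD_scalar IdS_scalar)
qed

text \<open>By bilinearity, the lambda-Leibniz defect of D on any two elements of K<X;D>
is a combination of generators.\<close>
lemma leibniz_defect_IdS:
  assumes "p \<in> KXD X" and "q \<in> KXD X"
  shows "leibniz_defect pD lam p q \<in> IdS X (Sset X lam)"
proof -
  have "keys p \<subseteq> opwords X" "keys q \<subseteq> opwords X" using assms by (auto simp: KXD_def)
  then show ?thesis
    unfolding pD_eq_lin_ext leibniz_defect_bilinear[of _ lam p q]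
    unfolding pD_eq_lin_ext[symmetric]
    by (blast intro: IdS_sum IdS_scalar generator_in_IdS Sset_leibniz_defect)
qed

theorem quotient_lambda_differential:
  fixes X :: "'x set" and lam :: "'k::comm_ring_1"
  shows "quotient_is_lambda_diff X lam (IdS X (Sset X lam))"
  unfolding quotient_is_lambda_diff_def
proof (intro conjI ballI subsetI)
  show "a \<in> KXD X" if "a \<in> IdS X (Sset X lam)" for a
    using IdS_KXD[OF that] Sset_KXD by blast
  fix p q :: "('x, 'k) opoly" assume "p \<in> KXD X" "q \<in> KXD X"
  from leibniz_defect_IdS[OF this, of lam]
  show "pD (pmul p q) - pmul (pD p) q - pmul p (pD q) - smult lam (pmul (pD p) (pD q))
        \<in> IdS X (Sset X lam)"
    by (simp add: leibniz_defect_def pmul_eq_times smult_eq_scalar)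
qed (use IdS_ideal IdS_pD in \<open>auto simp: pmul_eq_times\<close>)

section \<open>Evaluation in a lambda-differential algebra\<close>

fun ev_letter :: "('r::ring \<Rightarrow> 'r) \<Rightarrow> ('x \<Rightarrow> 'r) \<Rightarrow> 'x letter \<Rightarrow> 'r"
and ev_word :: "('r::ring \<Rightarrow> 'r) \<Rightarrow> ('x \<Rightarrow> 'r) \<Rightarrow> 'x letter list \<Rightarrow> 'r" where
  "ev_letter Dr f (V x) = f x"
| "ev_letter Dr f (Dl w) = Dr (ev_word Dr f w)"
| "ev_word Dr f [] = 0"
| "ev_word Dr f [l] = ev_letter Dr f l"
| "ev_word Dr f (l # l' # ls) = ev_letter Dr f l * ev_word Dr f (l' # ls)"

fun ev_star_letter :: "('r::ring \<Rightarrow> 'r) \<Rightarrow> ('x \<Rightarrow> 'r) \<Rightarrow> 'r \<Rightarrow> 'x option letter \<Rightarrow> 'r"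
and ev_star_word :: "('r::ring \<Rightarrow> 'r) \<Rightarrow> ('x \<Rightarrow> 'r) \<Rightarrow> 'r \<Rightarrow> 'x option letter list \<Rightarrow> 'r" where
  "ev_star_letter Dr f t (V None) = t"
| "ev_star_letter Dr f t (V (Some x)) = f x"
| "ev_star_letter Dr f t (Dl w) = Dr (ev_star_word Dr f t w)"
| "ev_star_word Dr f t [] = 0"
| "ev_star_word Dr f t [l] = ev_star_letter Dr f t l"
| "ev_star_word Dr f t (l # l' # ls) = ev_star_letter Dr f t l * ev_star_word Dr f t (l' # ls)"

lemma ev_word_Cons: "ls \<noteq> [] \<Longrightarrow> ev_word Dr f (l # ls) = ev_letter Dr f l * ev_word Dr f ls"
  by (cases ls) auto

lemma ev_word_append: "u \<noteq> [] \<Longrightarrow> v \<noteq> [] \<Longrightarrow> ev_word Dr f (u @ v) = ev_word Dr f u * ev_word Dr f v"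
  by (induction u rule: list_nonempty_induct) (simp_all add: ev_word_Cons mult.assoc)

lemma ev_star_word_Cons:
  "ls \<noteq> [] \<Longrightarrow> ev_star_word Dr f t (l # ls) = ev_star_letter Dr f t l * ev_star_word Dr f t ls"
  by (cases ls) auto

text \<open>If D_R(0) = 0, a word containing exactly one star evaluates to 0 when the
star is sent to 0: the star's factor is 0 and D_R preserves 0.\<close>
lemma ev_star_zero:
  assumes "Dr 0 = 0"
  shows "nstar_l l = 1 \<Longrightarrow> ev_star_letter Dr f 0 l = 0"
    and "nstar_w w = 1 \<Longrightarrow> ev_star_word Dr f 0 w = (0::'r::ring)"
proof (induction l and w rule: nstar_l_nstar_w.induct)
  case (5 l ls)
  show ?case
  proof (cases "ls = []")
    case True then show ?thesis using 5 by simp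
  next
    case False
    have "nstar_l l = 1 \<or> nstar_w ls = 1" using "5.prems" by simp arith
    then show ?thesis using 5 False by (auto simp: ev_star_word_Cons)
  qed
qed (auto simp: assms)

locale lambda_differential =
  fixes sc :: "'k::comm_ring_1 \<Rightarrow> 'r::ring \<Rightarrow> 'r" and Dr :: "'r \<Rightarrow> 'r" and lam :: 'k
  assumes lambda_diff: "lambda_diff_alg sc Dr lam"
begin

sublocale kmodule sc
  using lambda_diff by unfold_locales (auto simp: lambda_diff_alg_def)

lemma sc_one [simp]: "sc 1 x = x"
  using lambda_diff by (simp add: lambda_diff_alg_def)

lemma sc_times_right: "sc a (x * y) = x * sc a y"
  using lambda_diff unfolding lambda_diff_alg_def by blast

lemma sc_times_left: "sc a (x * y) = sc a x * y"
  using lambda_diff by (simp add: lambda_diff_alg_def)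

lemma Dr_add: "Dr (x + y) = Dr x + Dr y"
  using lambda_diff by (simp add: lambda_diff_alg_def)

lemma Dr_sc: "Dr (sc a x) = sc a (Dr x)"
  using lambda_diff by (simp add: lambda_diff_alg_def)

lemma Dr_leibniz: "Dr (x * y) = Dr x * y + x * Dr y + sc lam (Dr x * Dr y)"
  using lambda_diff by (simp add: lambda_diff_alg_def)

lemma Dr_zero [simp]: "Dr 0 = 0"
  using Dr_add[of 0 0] by simp

lemma Dr_sum: "Dr (sum f A) = (\<Sum>i\<in>A. Dr (f i))"
  by (induction A rule: infinite_finite_induct) (auto simp: Dr_add)

lemma sc_times_sc: "sc (a * b) (x * y) = sc a x * sc b y"
proof -
  have "sc (a * b) (x * y) = sc a (x * sc b y)" by (simp only: sc_mult sc_times_right)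
  then show ?thesis by (simp only: sc_times_left)
qed

definition eval_hom :: "('x \<Rightarrow> 'r) \<Rightarrow> ('x, 'k) opoly \<Rightarrow> 'r" where
  "eval_hom f = lin_ext (ev_word Dr f)"

lemma eval_hom_wd: "eval_hom f (wd w) = ev_word Dr f w"
  by (simp add: eval_hom_def wd_def lin_ext_single)

lemma eval_hom_zero [simp]: "eval_hom f 0 = 0"
  by (simp add: eval_hom_def)

lemma eval_hom_add: "eval_hom f (p + q) = eval_hom f p + eval_hom f q"
  by (simp add: eval_hom_def lin_ext_add)

lemma eval_hom_diff: "eval_hom f (p - q) = eval_hom f p - eval_hom f q"
  by (simp add: eval_hom_def lin_ext_diff)

lemma eval_hom_smult: "eval_hom f (smult c p) = sc c (eval_hom f p)"
  by (simp add: eval_hom_def lin_ext_smult)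

lemma eval_hom_times:
  assumes "p \<in> KXD X" and "q \<in> KXD X"
  shows "eval_hom f (p * q) = eval_hom f p * eval_hom f q"
proof -
  have nonempty: "u \<noteq> []" if "u \<in> keys p \<union> keys q" for u
    using that assms by (auto simp: KXD_def opwords_def)
  have "eval_hom f (p * q) = eval_hom f (pmul p q)" by (simp add: pmul_eq_times)
  also have "\<dots> = (\<Sum>(u, v)\<in>keys p \<times> keys q. sc (lookup p u * lookup q v) (ev_word Dr f (u @ v)))"
    unfolding pmul_def eval_hom_def lin_ext_sum by (intro sum.cong refl) (auto simp: lin_ext_single)
  also have "\<dots> = (\<Sum>(u, v)\<in>keys p \<times> keys q. sc (lookup p u) (ev_word Dr f u) * sc (lookup q v) (ev_word Dr f v))"
    by (intro sum.cong refl) (auto simp: ev_word_append nonempty sc_times_sc)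
  also have "\<dots> = eval_hom f p * eval_hom f q"
    by (simp add: eval_hom_def lin_ext_def sum_product sum.cartesian_product)
  finally show ?thesis .
qed

lemma eval_hom_pD: "eval_hom f (pD p) = Dr (eval_hom f p)"
proof -
  have "eval_hom f (pD p) = (\<Sum>u\<in>keys p. sc (lookup p u) (Dr (ev_word Dr f u)))"
    unfolding pD_def eval_hom_def lin_ext_sum by (intro sum.cong refl) (auto simp: lin_ext_single)
  also have "\<dots> = Dr (eval_hom f p)"
    by (simp add: eval_hom_def lin_ext_def Dr_sum Dr_sc)
  finally show ?thesis .
qed

lemma eval_hom_subst:
  shows "s \<in> KXD X \<Longrightarrow> wfl (star_alphabet X) l \<Longrightarrow>
           eval_hom f (subst_l l s) = ev_star_letter Dr f (eval_hom f s) l"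
    and "s \<in> KXD X \<Longrightarrow> w \<noteq> [] \<Longrightarrow> \<forall>l\<in>set w. wfl (star_alphabet X) l \<Longrightarrow>
           eval_hom f (subst_w w s) = ev_star_word Dr f (eval_hom f s) w"
proof (induction l s and w s rule: subst_l_subst_w.induct)
  case (2 x s) then show ?case by (simp add: eval_hom_wd)
next
  case (3 w s) then show ?case by (simp add: eval_hom_pD)
next
  case (6 l l' ls s)
  then have "subst_l l s \<in> KXD X" and "subst_w (l' # ls) s \<in> KXD X"
    using subst_KXD(1)[of s X l] subst_KXD(2)[of s X "l' # ls"] by auto
  from eval_hom_times[OF this] 6 show ?case by (simp add: pmul_eq_times)
qed auto

text \<open>The generators evaluate to 0: this is the lambda-Leibniz rule of R.\<close>
lemma eval_hom_Sset: "s \<in> Sset X lam \<Longrightarrow> eval_hom f s = 0"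
proof -
  assume "s \<in> Sset X lam"
  then obtain x y where xy: "x \<in> opwords X" "y \<in> opwords X"
    and s: "s = leibniz_defect pD lam (wd x) (wd y)"
    unfolding Sset_def leibniz_defect_def by (auto simp: pmul_eq_times smult_eq_scalar)
  have KXD: "wd x \<in> KXD X" "wd y \<in> KXD X" "pD (wd x) \<in> KXD X" "pD (wd y) \<in> KXD X"
    using xy by (auto intro!: KXD_wd KXD_pD)
  show "eval_hom f s = 0"
    unfolding s leibniz_defect_def
    by (simp add: eval_hom_diff eval_hom_smult eval_hom_times[OF KXD(3) KXD(2)]
        eval_hom_times[OF KXD(1) KXD(4)] eval_hom_times[OF KXD(3) KXD(4)]
        eval_hom_times[OF KXD(1) KXD(2)] eval_hom_pD eval_hom_wd Dr_leibniz
        flip: smult_eq_scalar)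
qed

lemma eval_hom_IdS: "a \<in> IdS X (Sset X lam) \<Longrightarrow> eval_hom f a = 0"
proof (induction rule: IdS.induct)
  case (gen u s)
  then have s: "s \<in> KXD X" and u: "u \<noteq> []" "\<forall>l\<in>set u. wfl (star_alphabet X) l" "nstar_w u = 1"
    using Sset_KXD by (auto simp: star_words_iff)
  have "eval_hom f (subst_w u s) = ev_star_word Dr f (eval_hom f s) u"
    by (rule eval_hom_subst(2)[OF s u(1,2)])
  also have "\<dots> = ev_star_word Dr f 0 u"
    using eval_hom_Sset[OF gen(2)] by simp
  also have "\<dots> = 0"
    by (rule ev_star_zero(2)[where Dr = Dr, OF Dr_zero u(3)])
  finally show ?case .
qed (simp_all add: eval_hom_add eval_hom_smult)

lemma eval_hom_quot_hom_ext: "quot_hom_ext X (IdS X (Sset X lam)) sc Dr f (eval_hom f)"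
  unfolding quot_hom_ext_def
  by (auto simp: pmul_eq_times eval_hom_add eval_hom_smult eval_hom_times eval_hom_pD
      eval_hom_IdS eval_hom_wd)

text \<open>Uniqueness in part (2): a homomorphism extending f is determined on
letters (by induction on the letter, using that it commutes with D), hence on
words, hence by linearity everywhere.\<close>
lemma quot_hom_ext_word:
  assumes hom: "quot_hom_ext X I sc Dr f \<psi>" and w: "w \<in> opwords X"
  shows "\<psi> (wd w) = ev_word Dr f w"
proof -
  have times: "\<psi> (p * q) = \<psi> p * \<psi> q" if "p \<in> KXD X" "q \<in> KXD X" for p q
    using hom that by (simp add: quot_hom_ext_def pmul_eq_times)
  have from_letters: "\<psi> (wd w) = ev_word Dr f w"
    if "w \<noteq> []" "\<forall>l\<in>set w. wfl X l \<and> \<psi> (wd [l]) = ev_letter Dr f l" for w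
    using that
  proof (induction w rule: list_nonempty_induct)
    case (cons l w)
    then have "wd [l] \<in> KXD X" "wd w \<in> KXD X" by (auto intro!: KXD_wd simp: opwords_def)
    from times[OF this] cons show ?case by (simp add: ev_word_Cons flip: wd_Cons)
  qed simp
  have letter: "\<psi> (wd [l]) = ev_letter Dr f l" if "wfl X l" for l
    using that
  proof (induction l)
    case (V x) then show ?case using hom by (simp add: quot_hom_ext_def)
  next
    case (Dl w)
    then have "w \<in> opwords X" and "\<psi> (wd w) = ev_word Dr f w"
      by (auto simp: opwords_def intro!: from_letters)
    then show ?case using hom by (simp add: quot_hom_ext_def KXD_wd flip: pD_wd)
  qed
  show ?thesis using w letter by (auto simp: opwords_def intro!: from_letters)
qed

lemma quot_hom_ext_unique:
  assumes hom: "quot_hom_ext X I sc Dr f \<psi>" and p: "p \<in> KXD X"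
  shows "\<psi> p = eval_hom f p"
proof -
  have additive: "\<psi> (a + b) = \<psi> a + \<psi> b" if "a \<in> KXD X" "b \<in> KXD X" for a b
    using hom that by (simp add: quot_hom_ext_def)
  have "keys p \<subseteq> opwords X" using p by (simp add: KXD_def)
  then show ?thesis
  proof (induction p rule: keys_induct)
    case zero then show ?case using additive[of 0 0] by simp
  next
    case (single u c)
    then show ?case using hom quot_hom_ext_word[OF hom single]
      by (simp add: quot_hom_ext_def single_eq_smult_wd eval_hom_smult eval_hom_wd KXD_wd)
  next
    case (add a b)
    then show ?case using additive[of a b] by (simp add: KXD_def eval_hom_add)
  qed
qed

end

section \<open>Linear independence of the basis words\<close>

text \<open>The monoid algebra itself carries a lambda-derivation: on a word it is
computed from the lambda-Leibniz rule, with D applied to a single letter l being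
the one-letter word D(l).  This operator fixes the words over D^\<omega>(X) when they
are evaluated, so it separates them from Id(S).\<close>

fun Dword :: "'k::comm_ring_1 \<Rightarrow> 'x letter list \<Rightarrow> ('x, 'k) opoly" where
  "Dword lam [] = 0"
| "Dword lam [l] = wd [Dl [l]]"
| "Dword lam (l # l' # ls) = wd [Dl [l]] * wd (l' # ls) + wd [l] * Dword lam (l' # ls)
      + scalar lam * (wd [Dl [l]] * Dword lam (l' # ls))"

lemma Dword_Cons:
  "ls \<noteq> [] \<Longrightarrow> Dword lam (l # ls) = wd [Dl [l]] * wd ls + wd [l] * Dword lam ls
      + scalar lam * (wd [Dl [l]] * Dword lam ls)"
  by (cases ls) auto

text \<open>The ring identity behind the inductive step of the Leibniz rule for Dword,
for a central element L playing the role of lambda.\<close>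
lemma leibniz_step_identity:
  fixes A B L Du wu wv Dv :: "'a::ring"
  assumes central: "\<And>z. z * L = L * z"
  shows "A * (wu * wv) + B * (Du * wv + wu * Dv + L * (Du * Dv)) + L * (A * (Du * wv + wu * Dv + L * (Du * Dv)))
     = (A * wu + B * Du + L * (A * Du)) * wv + (B * wu) * Dv + L * ((A * wu + B * Du + L * (A * Du)) * Dv)"
proof -
  have commute: "x * (L * y) = L * (x * y)" for x y by (metis central mult.assoc)
  show ?thesis by (simp add: ring_distribs mult.assoc commute[of A] commute[of B] add_ac)
qed

lemma Dword_leibniz:
  "Dword lam (u @ v) = Dword lam u * wd v + wd u * Dword lam v + scalar lam * (Dword lam u * Dword lam v)"
proof (induction u)
  case Nil then show ?case by (simp add: wd_Nil)
next
  case (Cons a u)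
  show ?case
  proof (cases "u = []")
    case True
    then show ?thesis by (cases "v = []") (simp_all add: wd_Nil Dword_Cons)
  next
    case False
    have "Dword lam ((a # u) @ v) = wd [Dl [a]] * (wd u * wd v) + wd [a] * Dword lam (u @ v)
      + scalar lam * (wd [Dl [a]] * Dword lam (u @ v))"
      using Dword_Cons[of "u @ v" lam a] False by (simp add: wd_append)
    also have "\<dots> = (wd [Dl [a]] * wd u + wd [a] * Dword lam u + scalar lam * (wd [Dl [a]] * Dword lam u)) * wd v
       + (wd [a] * wd u) * Dword lam v
       + scalar lam * ((wd [Dl [a]] * wd u + wd [a] * Dword lam u + scalar lam * (wd [Dl [a]] * Dword lam u)) * Dword lam v)"
      unfolding Cons.IH by (rule leibniz_step_identity) (rule scalar_central[symmetric])
    also have "\<dots> = Dword lam (a # u) * wd v + wd (a # u) * Dword lam v + scalar lam * (Dword lam (a # u) * Dword lam v)"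
      using Dword_Cons[OF False, of lam a] by (simp add: wd_Cons[of a u])
    finally show ?thesis .
  qed
qed

lemma monoid_algebra_lambda_diff:
  "lambda_diff_alg (\<lambda>c x. scalar c * x) (alg.lin_ext (Dword lam)) (lam :: 'k::comm_ring_1)"
  unfolding lambda_diff_alg_def
proof (intro conjI allI)
  fix x y :: "('x, 'k) opoly" and a b :: 'k
  let ?D = "alg.lin_ext (Dword lam)"
  show "scalar a * (x + y) = scalar a * x + scalar a * y" by (rule distrib_left)
  show "scalar (a + b) * x = scalar a * x + scalar b * x" by (simp only: single_add distrib_right)
  show "scalar (a * b) * x = scalar a * (scalar b * x)" by (rule scalar_scalar[symmetric])
  show "scalar 1 * x = x" by simp
  show "scalar a * (x * y) = scalar a * x * y" by (simp only: mult.assoc)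
  show "scalar a * (x * y) = x * (scalar a * y)" by (rule times_scalar_times[symmetric])
  show "?D (x + y) = ?D x + ?D y" by (rule alg.lin_ext_add)
  show "?D (scalar a * x) = scalar a * ?D x" by (rule alg_lin_ext_scalar)
  have "leibniz_defect ?D lam (wd u) (wd v) = 0" for u v :: "'x letter list"
    by (simp add: leibniz_defect_def alg_lin_ext_wd Dword_leibniz flip: wd_append)
  then have "leibniz_defect ?D lam x y = 0"
    by (subst leibniz_defect_bilinear) simp
  then show "?D (x * y) = ?D x * y + x * ?D y + scalar lam * (?D x * ?D y)"
    unfolding leibniz_defect_def by (simp add: diff_eq_eq)
qed

text \<open>A combination of basis words lying in Id(S) is zero: evaluating in the monoid
algebra with the lambda-derivation above and x \<mapsto> x fixes each basis word, while
it annihilates Id(S).\<close>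
lemma basis_words_independent:
  fixes X :: "'x set" and lam :: "'k::comm_ring_1" and q :: "('x, 'k) opoly"
  assumes basis: "keys q \<subseteq> basis_words X" and ideal: "q \<in> IdS X (Sset X lam)"
  shows "q = 0"
proof -
  interpret free: lambda_differential "\<lambda>c (x::('x, 'k) opoly). scalar c * x" "alg.lin_ext (Dword lam)" lam
    by (rule lambda_differential.intro, rule monoid_algebra_lambda_diff)
  let ?f = "\<lambda>x. wd [V x] :: ('x, 'k) opoly" and ?D = "alg.lin_ext (Dword lam)"
  have letter: "ev_letter ?D ?f (Dpow i x) = wd [Dpow i x]" for i x
    by (induction i) (simp_all add: alg_lin_ext_wd)
  have word: "ev_word ?D ?f b = wd b" if "b \<in> basis_words X" for b
  proof -
    from that have "b \<noteq> []" and "\<forall>l\<in>set b. \<exists>i x. l = Dpow i x"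
      unfolding basis_words_def by blast+
    then show ?thesis
      by (induction b rule: list_nonempty_induct) (auto simp: letter ev_word_Cons simp flip: wd_Cons)
  qed
  have "free.eval_hom ?f q = (\<Sum>u\<in>keys q. scalar (lookup q u) * wd u)"
    unfolding free.eval_hom_def alg_lin_ext_expand[of _ q] using basis
    by (intro sum.cong refl) (auto simp: word)
  also have "\<dots> = q" by (rule sum_scalar_words[symmetric])
  finally show ?thesis using free.eval_hom_IdS[OF ideal] by simp
qed

section \<open>The basis words span the quotient\<close>

lemma wfl_Dpow: "x \<in> X \<Longrightarrow> wfl X (Dpow i x)"
  by (induction i) auto

lemma basis_words_opwords: "basis_words X \<subseteq> opwords X"
  unfolding basis_words_def opwords_def using wfl_Dpow by fastforce

lemma basis_words_append: "u \<in> basis_words X \<Longrightarrow> v \<in> basis_words X \<Longrightarrow> u @ v \<in> basis_words X"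
  unfolding basis_words_def by auto

lemma basis_words_KXD: "keys q \<subseteq> basis_words X \<Longrightarrow> q \<in> KXD X"
  unfolding KXD_def using basis_words_opwords by blast

definition basis_reducible :: "'x set \<Rightarrow> 'k::comm_ring_1 \<Rightarrow> ('x, 'k) opoly \<Rightarrow> bool" where
  "basis_reducible X lam p \<longleftrightarrow> (\<exists>q. keys q \<subseteq> basis_words X \<and> p - q \<in> IdS X (Sset X lam))"

lemma basis_reducible_congruent:
  assumes "basis_reducible X lam p'" and "p - p' \<in> IdS X (Sset X lam)"
  shows "basis_reducible X lam p"
proof -
  obtain q where q: "keys q \<subseteq> basis_words X" "p' - q \<in> IdS X (Sset X lam)"
    using assms(1) unfolding basis_reducible_def by blast
  have "p - q = (p - p') + (p' - q)" by simp
  then have "p - q \<in> IdS X (Sset X lam)" using IdS.add[OF assms(2) q(2)] by simp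
  with q(1) show ?thesis unfolding basis_reducible_def by blast
qed

lemma basis_reducible_wd: "b \<in> basis_words X \<Longrightarrow> basis_reducible X lam (wd b)"
  unfolding basis_reducible_def by (rule exI[of _ "wd b"]) (simp add: IdS.zero wd_def)

lemma basis_reducible_zero: "basis_reducible X lam 0"
  unfolding basis_reducible_def by (rule exI[of _ 0]) (simp add: IdS.zero)

lemma basis_reducible_add:
  assumes "basis_reducible X lam p" and "basis_reducible X lam p'"
  shows "basis_reducible X lam (p + p')"
proof -
  obtain q q' where q: "keys q \<subseteq> basis_words X" "p - q \<in> IdS X (Sset X lam)"
    and q': "keys q' \<subseteq> basis_words X" "p' - q' \<in> IdS X (Sset X lam)"
    using assms unfolding basis_reducible_def by blast
  have "(p + p') - (q + q') = (p - q) + (p' - q')" by simp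
  then have "(p + p') - (q + q') \<in> IdS X (Sset X lam)" using IdS.add[OF q(2) q'(2)] by metis
  moreover have "keys (q + q') \<subseteq> basis_words X" using keys_add[of q q'] q(1) q'(1) by blast
  ultimately show ?thesis unfolding basis_reducible_def by blast
qed

lemma basis_reducible_scalar:
  assumes "basis_reducible X lam p"
  shows "basis_reducible X lam (scalar c * p)"
proof -
  obtain q where q: "keys q \<subseteq> basis_words X" "p - q \<in> IdS X (Sset X lam)"
    using assms unfolding basis_reducible_def by blast
  have "scalar c * p - scalar c * q = scalar c * (p - q)" by (simp add: right_diff_distrib)
  then have "scalar c * p - scalar c * q \<in> IdS X (Sset X lam)" using IdS_scalar[OF q(2)] by simp
  moreover have "keys (scalar c * q) \<subseteq> basis_words X" using keys_scalar_times[of c q] q(1) by blast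
  ultimately show ?thesis unfolding basis_reducible_def by blast
qed

lemma basis_reducible_sum:
  "(\<And>i. i \<in> A \<Longrightarrow> basis_reducible X lam (f i)) \<Longrightarrow> basis_reducible X lam (sum f A)"
  by (induction A rule: infinite_finite_induct) (auto intro: basis_reducible_add basis_reducible_zero)

text \<open>Products of basis words are basis words, and Id(S) is an ideal.\<close>
lemma basis_reducible_times:
  assumes "basis_reducible X lam p" "basis_reducible X lam p'" and "p' \<in> KXD X"
  shows "basis_reducible X lam (p * p')"
proof -
  obtain q q' where q: "keys q \<subseteq> basis_words X" "p - q \<in> IdS X (Sset X lam)"
    and q': "keys q' \<subseteq> basis_words X" "p' - q' \<in> IdS X (Sset X lam)"
    using assms(1,2) unfolding basis_reducible_def by blast
  have "p * p' - q * q' = (p - q) * p' + q * (p' - q')" by (simp add: algebra_simps)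
  moreover have "(p - q) * p' \<in> IdS X (Sset X lam)" using IdS_ideal[OF q(2) assms(3)] by blast
  moreover have "q * (p' - q') \<in> IdS X (Sset X lam)"
    using IdS_ideal[OF q'(2) basis_words_KXD[OF q(1)]] by blast
  ultimately have "p * p' - q * q' \<in> IdS X (Sset X lam)" by (simp add: IdS.add)
  moreover have "keys (q * q') \<subseteq> basis_words X"
    using keys_times[of q q'] q(1) q'(1) basis_words_append by blast
  ultimately show ?thesis unfolding basis_reducible_def by blast
qed

text \<open>The key step: D applied to a basis word l b' (l a letter D^i(x)) is rewritten
by the lambda-Leibniz rule, which holds modulo Id(S), into products of basis
words and D(b'); induction on the length finishes.\<close>
lemma basis_reducible_Dl: "b \<in> basis_words X \<Longrightarrow> basis_reducible X lam (wd [Dl b])"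
proof (induction "length b" arbitrary: b rule: less_induct)
  case less
  obtain l b' where b: "b = l # b'" using less.prems by (cases b) (auto simp: basis_words_def)
  obtain i x where l: "l = Dpow i x" "x \<in> X" using less.prems b by (auto simp: basis_words_def)
  have Dl: "[Dl [l]] \<in> basis_words X" using l by (auto simp: basis_words_def intro!: exI[of _ "Suc i"])
  show ?case
  proof (cases "b' = []")
    case True
    then show ?thesis using basis_reducible_wd[OF Dl] b by simp
  next
    case False
    have b': "b' \<in> basis_words X" using less.prems b False by (auto simp: basis_words_def)
    have lb: "[l] \<in> basis_words X" using l by (auto simp: basis_words_def)
    have IH: "basis_reducible X lam (wd [Dl b'])" using less.hyps[OF _ b'] b by simp
    have KXD: "wd b' \<in> KXD X" "wd [Dl b'] \<in> KXD X"
      using b' basis_words_opwords by (blast intro: KXD_wd opwords_Dl)+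
    let ?R = "wd [Dl [l]] * wd b' + wd [l] * wd [Dl b'] + scalar lam * (wd [Dl [l]] * wd [Dl b'])"
    have R: "basis_reducible X lam ?R"
      by (intro basis_reducible_add basis_reducible_scalar basis_reducible_times basis_reducible_wd
          IH Dl b' lb KXD)
    have "leibniz_defect pD lam (wd [l]) (wd b') = wd [Dl b] - ?R"
      unfolding leibniz_defect_def b by (simp add: pD_wd wd_Cons[of l b', symmetric] diff_diff_eq)
    moreover have "leibniz_defect pD lam (wd [l]) (wd b') \<in> IdS X (Sset X lam)"
      using lb b' basis_words_opwords by (blast intro: generator_in_IdS Sset_leibniz_defect)
    ultimately have "wd [Dl b] - ?R \<in> IdS X (Sset X lam)" by simp
    with R show ?thesis by (rule basis_reducible_congruent)
  qed
qed

lemma basis_reducible_pD: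
  assumes "basis_reducible X lam p"
  shows "basis_reducible X lam (pD p)"
proof -
  obtain q where q: "keys q \<subseteq> basis_words X" "p - q \<in> IdS X (Sset X lam)"
    using assms unfolding basis_reducible_def by blast
  have "pD q = (\<Sum>u\<in>keys q. scalar (lookup q u) * wd [Dl u])"
    by (simp add: pD_eq_lin_ext alg_lin_ext_expand)
  moreover have "basis_reducible X lam (\<Sum>u\<in>keys q. scalar (lookup q u) * wd [Dl u])"
    using q(1) by (intro basis_reducible_sum basis_reducible_scalar basis_reducible_Dl) blast
  ultimately have "basis_reducible X lam (pD q)" by simp
  moreover have "pD p - pD q \<in> IdS X (Sset X lam)" using IdS_pD[OF q(2)] by (simp add: pD_diff)
  ultimately show ?thesis by (rule basis_reducible_congruent)
qed

text \<open>Every operated word, and hence every element of K<X;D>, is basis reducible: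
induction on the nesting of letters, using products and D.\<close>
lemma basis_reducible_word:
  "w \<noteq> [] \<Longrightarrow> \<forall>l\<in>set w. wfl X l \<and> basis_reducible X lam (wd [l]) \<Longrightarrow> basis_reducible X lam (wd w)"
proof (induction w rule: list_nonempty_induct)
  case (cons l w)
  then have "basis_reducible X lam (wd [l])" and "basis_reducible X lam (wd w)" and "wd w \<in> KXD X"
    by (auto intro!: KXD_wd simp: opwords_def)
  then show ?case unfolding wd_Cons[of l w] by (rule basis_reducible_times)
qed simp

lemma basis_reducible_letter: "wfl X l \<Longrightarrow> basis_reducible X lam (wd [l])"
proof (induction l)
  case (V x)
  then have "[V x] \<in> basis_words X" by (auto simp: basis_words_def intro!: exI[of _ 0])
  then show ?case by (rule basis_reducible_wd)
next
  case (Dl w)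
  then have "w \<noteq> []" and "\<forall>y\<in>set w. wfl X y \<and> basis_reducible X lam (wd [y])" by auto
  then have "basis_reducible X lam (pD (wd w))" by (intro basis_reducible_pD basis_reducible_word)
  then show ?case by (simp add: pD_wd)
qed

lemma basis_reducible_KXD:
  assumes "p \<in> KXD X"
  shows "basis_reducible X lam p"
proof -
  have "keys p \<subseteq> opwords X" using assms by (simp add: KXD_def)
  then show ?thesis
  proof (induction p rule: keys_induct)
    case zero then show ?case by (rule basis_reducible_zero)
  next
    case (single u c)
    then have "u \<noteq> []" and "\<forall>y\<in>set u. wfl X y \<and> basis_reducible X lam (wd [y])"
      by (auto simp: opwords_def basis_reducible_letter)
    then have "basis_reducible X lam (wd u)" by (rule basis_reducible_word)
    then show ?case unfolding single_eq_scalar_wd[of u c] by (rule basis_reducible_scalar)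
  next
    case (add a b) from add(3,4) show ?case by (rule basis_reducible_add)
  qed
qed

theorem basis_words_quotient_basis:
  fixes X :: "'x set" and lam :: "'k::comm_ring_1"
  shows "is_quotient_basis X (IdS X (Sset X lam)) (basis_words X)"
  unfolding is_quotient_basis_def
proof
  fix p :: "('x, 'k) opoly" assume "p \<in> KXD X"
  then obtain q where q: "keys q \<subseteq> basis_words X" "p - q \<in> IdS X (Sset X lam)"
    using basis_reducible_KXD unfolding basis_reducible_def by blast
  show "\<exists>!q. keys q \<subseteq> basis_words X \<and> p - q \<in> IdS X (Sset X lam)"
  proof (rule ex1I[of _ q])
    fix q' assume q': "keys q' \<subseteq> basis_words X \<and> p - q' \<in> IdS X (Sset X lam)"
    have "(p - q') - (p - q) \<in> IdS X (Sset X lam)" using q' q(2) by (blast intro: IdS_diff)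
    then have "q - q' \<in> IdS X (Sset X lam)" by simp
    moreover have "keys (q - q') \<subseteq> basis_words X" using keys_diff[of q q'] q(1) q' by blast
    ultimately have "q - q' = 0" by (rule basis_words_independent[rotated])
    then show "q' = q" by simp
  qed (use q in blast)
qed

theorem theorem5p5:
  fixes X :: "'x set" and lam :: "'k::comm_ring_1"
  shows "quotient_is_lambda_diff X lam (IdS X (Sset X lam))
     \<and> (\<forall>(sc :: 'k \<Rightarrow> 'r::ring \<Rightarrow> 'r) Dr (f :: 'x \<Rightarrow> 'r). lambda_diff_alg sc Dr lam \<longrightarrow>
           (\<exists>\<phi>. quot_hom_ext X (IdS X (Sset X lam)) sc Dr f \<phi> \<and>
                 (\<forall>\<psi>. quot_hom_ext X (IdS X (Sset X lam)) sc Dr f \<psi> \<longrightarrow>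
                        (\<forall>p\<in>KXD X. \<psi> p = \<phi> p))))
     \<and> is_quotient_basis X (IdS X (Sset X lam)) (basis_words X)"
proof (intro conjI allI impI)
  show "quotient_is_lambda_diff X lam (IdS X (Sset X lam))"
    by (rule quotient_lambda_differential)
  show "is_quotient_basis X (IdS X (Sset X lam)) (basis_words X)"
    by (rule basis_words_quotient_basis)
next
  fix sc :: "'k \<Rightarrow> 'r::ring \<Rightarrow> 'r" and Dr f
  assume "lambda_diff_alg sc Dr lam"
  then interpret R: lambda_differential sc Dr lam by (rule lambda_differential.intro)
  show "\<exists>\<phi>. quot_hom_ext X (IdS X (Sset X lam)) sc Dr f \<phi> \<and>
          (\<forall>\<psi>. quot_hom_ext X (IdS X (Sset X lam)) sc Dr f \<psi> \<longrightarrow> (\<forall>p\<in>KXD X. \<psi> p = \<phi> p))"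
    using R.eval_hom_quot_hom_ext R.quot_hom_ext_unique by blast
qed

end
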